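(* Let $\widehat{A}=A+\epsilon B$ and $\widehat{C}=C+\epsilon D$ with $A,B,C,D\in\mathbb{R}^{n\times n}$ be such that the dual core generalized inverses of $\widehat{A}$, $\widehat{C}$ and $\widehat{A}\widehat{C}$ exist and have the particular form $\widehat{A}^{\oplus}=A^{\oplus}-\epsilon A^{\oplus}BA^{\oplus}$, $\widehat{C}^{\oplus}=C^{\oplus}-\epsilon C^{\oplus}DC^{\oplus}$, $(\widehat{A}\widehat{C})^{\oplus}=(AC)^{\oplus}-\epsilon (AC)^{\oplus}(AD+BC)(AC)^{\oplus}$. If $AC=CA$, $A^*C=CA^*$, $C^{\oplus}B=BC^{\oplus}$ and $A^{\oplus}D=DA^{\oplus}$, then $(\widehat{A}\widehat{C})^{\oplus}=\widehat{A}^{\oplus}\widehat{C}^{\oplus}=\widehat{C}^{\oplus}\widehat{A}^{\oplus}$.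
   Context: A dual number is $a+\epsilon b$ with $a,b\in\mathbb{R}$, where $\epsilon\neq 0$, $\epsilon^2=0$ and $\epsilon$ commutes with reals. A dual matrix is $A+\epsilon B$ with $A,B$ real; sums and products are computed formally using $\epsilon^2=0$, transposition is $(A+\epsilon B)^T=A^T+\epsilon B^T$, and equality means equality of real and dual parts. $A^*$ denotes the (conjugate) transpose of a real matrix. For a real square matrix $A$ of index at most $1$, $A^{\oplus}$ denotes its core inverse, the unique matrix $G$ with $AGA=A$, $AG^2=G$, $(AG)^T=AG$. For a square dual matrix $\widehat{A}$ of dual index $1$, the dual core generalized inverse (DCGI) $\widehat{A}^{\oplus}$ is the dual matrix $\widehat{X}$ (if it exists) with $\widehat{A}\widehat{X}\widehat{A}=\widehat{A}$, $\widehat{A}\widehat{X}^2=\widehat{X}$, $(\widehat{A}\widehat{X})^T=\widehat{A}\widehat{X}$. *)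

theory Defs
  imports "HOL-Analysis.Analysis"
begin

text \<open>Real square matrices are of type real^'n^'n (n = CARD('n)).
A dual matrix A + eps B is represented by the pair (A, B).\<close>

type_synonym 'n dmat = "(real^'n^'n) \<times> (real^'n^'n)"

definition dmult :: "'n::finite dmat \<Rightarrow> 'n dmat \<Rightarrow> 'n dmat" where
  "dmult X Y = (fst X ** fst Y, fst X ** snd Y + snd X ** fst Y)"

definition dtranspose :: "'n::finite dmat \<Rightarrow> 'n dmat" where
  "dtranspose X = (transpose (fst X), transpose (snd X))"

definition is_core_inverse :: "real^'n^'n \<Rightarrow> real^'n^'n \<Rightarrow> bool" where
  "is_core_inverse A G \<longleftrightarrow> A ** G ** A = A \<and> A ** (G ** G) = G \<and> transpose (A ** G) = A ** G"

definition has_core_inverse :: "real^'n^'n \<Rightarrow> bool" where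
  "has_core_inverse A \<longleftrightarrow> (\<exists>G. is_core_inverse A G)"

definition core_inv :: "real^'n^'n \<Rightarrow> real^'n^'n" where
  "core_inv A = (THE G. is_core_inverse A G)"

definition is_dcgi :: "'n::finite dmat \<Rightarrow> 'n dmat \<Rightarrow> bool" where
  "is_dcgi Ah X \<longleftrightarrow> dmult (dmult Ah X) Ah = Ah \<and> dmult Ah (dmult X X) = X
     \<and> dtranspose (dmult Ah X) = dmult Ah X"

definition dcgi_form :: "'n::finite dmat \<Rightarrow> 'n dmat" where
  "dcgi_form Ah = (core_inv (fst Ah), - (core_inv (fst Ah) ** snd Ah ** core_inv (fst Ah)))"

end

theory Submission
  imports Defs
begin

text \<open>A matrix with a core inverse has index at most one,
\<open>rank (A\<^sup>2) = rank A\<close>, so \<open>A (A U) = A (A V)\<close> forces \<open>A U = A V\<close>. This cancellation yields uniqueness of the core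
inverse and shows that \<open>A\<^sup>\<oplus>\<close> commutes with every matrix commuting with both \<open>A\<close> and \<open>A\<^sup>T\<close>.
Under the hypotheses, therefore, \<open>A\<close>, \<open>C\<close>, \<open>A\<^sup>\<oplus>\<close>, \<open>C\<^sup>\<oplus>\<close> pairwise commute,
\<open>(A C)\<^sup>\<oplus> = A\<^sup>\<oplus> C\<^sup>\<oplus>\<close>, and with \<open>A\<^sup>\<oplus> A A\<^sup>\<oplus> = A\<^sup>\<oplus>\<close> the dual parts of the three
products can be rearranged into one another.\<close>

lemma matrix_mul_uminus_right: "(X::'a::ring_1^'n^'m) ** (- Y) = - (X ** Y)"
  by (simp add: matrix_matrix_mult_def vec_eq_iff sum_negf)

lemma matrix_mul_uminus_left: "(- X::'a::ring_1^'n^'m) ** Y = - (X ** Y)"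
  by (simp add: matrix_matrix_mult_def vec_eq_iff sum_negf)

lemma matrix_add_rdistrib: "((X::'a::semiring_1^'n^'m) + Y) ** Z = X ** Z + Y ** Z"
  by (simp add: matrix_matrix_mult_def vec_eq_iff sum.distrib distrib_right)

lemma range_transpose_square_eq:
  fixes M :: "real^'n^'n"
  assumes "rank (M ** M) = rank M"
  shows "range ((*v) (transpose M ** transpose M)) = range ((*v) (transpose M))"
proof (rule subspace_dim_equal)
  show "subspace (range ((*v) (transpose M ** transpose M)))"
    and "subspace (range ((*v) (transpose M)))"
    by (metis linear_subspace_image matrix_vector_mul_linear subspace_UNIV)+
  show "range ((*v) (transpose M ** transpose M)) \<subseteq> range ((*v) (transpose M))"
    by (metis image_subsetI matrix_vector_mul_assoc rangeI)
  have "rank (transpose M ** transpose M) = rank (transpose M)"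
    using assms by (simp add: matrix_transpose_mul [symmetric] rank_transpose)
  then show "dim (range ((*v) (transpose M))) \<le> dim (range ((*v) (transpose M ** transpose M)))"
    by (simp add: rank_dim_range)
qed

lemma square_mulv_eq_zero:
  fixes M :: "real^'n^'n"
  assumes "rank (M ** M) = rank M" and "M *v (M *v v) = 0"
  shows "M *v v = 0"
proof -
  let ?T = "transpose M"
  have "?T *v (M *v v) \<in> range ((*v) (?T ** ?T))"
    using range_transpose_square_eq [OF assms(1)] by auto
  then obtain y where "?T *v (M *v v) = (?T ** ?T) *v y"
    by auto
  then have y: "?T *v (M *v v) = ?T *v (?T *v y)"
    by (metis matrix_vector_mul_assoc)
  have "(M *v v) \<bullet> (M *v v) = v \<bullet> (?T *v (M *v v))"
    by (metis dot_lmul_matrix vector_transpose_matrix)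
  also have "\<dots> = (M *v (M *v v)) \<bullet> y"
    by (metis y dot_lmul_matrix vector_transpose_matrix)
  finally show ?thesis
    using assms(2) by simp
qed

lemma square_mult_cancel:
  fixes M :: "real^'n^'n"
  assumes "rank (M ** M) = rank M" and "M ** (M ** U) = M ** (M ** V)"
  shows "M ** U = M ** V"
proof -
  have "M *v (U *v x - V *v x) = 0" for x
  proof (rule square_mulv_eq_zero [OF assms(1)])
    show "M *v (M *v (U *v x - V *v x)) = 0"
      using assms(2) by (simp add: matrix_vector_mult_diff_distrib matrix_vector_mul_assoc)
  qed
  then show ?thesis
    by (simp add: matrix_eq matrix_vector_mult_diff_distrib matrix_vector_mul_assoc)
qed

lemma core_inverse_simps:
  fixes A G :: "real^'n^'n"
  assumes "is_core_inverse A G"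
  shows "A ** G ** A = A" "A ** G ** G = G" "X ** A ** G ** A = X ** A" "X ** A ** G ** G = X ** G"
    and "transpose (A ** G) = A ** G"
proof -
  have "A ** (G ** A) = A" and "A ** (G ** G) = G" and "transpose (A ** G) = A ** G"
    using assms by (auto simp: is_core_inverse_def matrix_mul_assoc)
  then show "A ** G ** A = A" "A ** G ** G = G" "X ** A ** G ** A = X ** A"
      "X ** A ** G ** G = X ** G" "transpose (A ** G) = A ** G"
    by (simp_all add: matrix_mul_assoc [symmetric])
qed

lemma core_inverse_rank_square:
  fixes A G :: "real^'n^'n"
  assumes "is_core_inverse A G"
  shows "rank (A ** A) = rank A"
proof (rule antisym)
  show "rank (A ** A) \<le> rank A"
    by (rule rank_mul_le_left)
  have "A = A ** A ** (G ** G ** A)"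
    by (simp add: matrix_mul_assoc core_inverse_simps [OF assms])
  then have "rank A = rank (A ** A ** (G ** G ** A))"
    by simp
  also have "\<dots> \<le> rank (A ** A)"
    by (rule rank_mul_le_left)
  finally show "rank A \<le> rank (A ** A)" .
qed

lemma core_inverse_cancel:
  fixes A G :: "real^'n^'n"
  assumes "is_core_inverse A G" and "A ** (A ** U) = A ** (A ** V)"
  shows "A ** U = A ** V"
  using square_mult_cancel [OF core_inverse_rank_square [OF assms(1)] assms(2)] .

lemma core_inverse_outer_inverse:
  fixes A G :: "real^'n^'n"
  assumes "is_core_inverse A G"
  shows "G ** A ** G = G"
proof -
  note simps = core_inverse_simps [OF assms]
  have "A ** (G ** G ** A ** G) = A ** (G ** G)"
  proof (rule core_inverse_cancel [OF assms])
    show "A ** (A ** (G ** G ** A ** G)) = A ** (A ** (G ** G))"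
      by (simp add: matrix_mul_assoc simps)
  qed
  then show ?thesis
    by (simp add: matrix_mul_assoc simps)
qed

lemma core_inverse_unique:
  fixes A G G' :: "real^'n^'n"
  assumes "is_core_inverse A G" and "is_core_inverse A G'"
  shows "G = G'"
proof -
  note simps = core_inverse_simps [OF assms(1)] and simps' = core_inverse_simps [OF assms(2)]
  have "A ** G = transpose (A ** G' ** (A ** G))"
    by (simp add: matrix_mul_assoc simps simps')
  also have "\<dots> = A ** G ** (A ** G')"
    by (subst matrix_transpose_mul) (simp only: simps(5) simps'(5))
  also have "\<dots> = A ** G'"
    by (simp add: matrix_mul_assoc simps)
  finally have "A ** (A ** (G ** G)) = A ** (A ** (G' ** G'))"
    by (metis matrix_mul_assoc simps(4) simps'(4))
  then have "A ** (G ** G) = A ** (G' ** G')"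
    by (rule core_inverse_cancel [OF assms(1)])
  then show ?thesis
    by (simp add: matrix_mul_assoc simps simps')
qed

lemma core_inv_eqI:
  fixes A G :: "real^'n^'n"
  assumes "is_core_inverse A G"
  shows "core_inv A = G"
  unfolding core_inv_def using assms core_inverse_unique by blast

lemma is_core_inverse_core_inv:
  fixes A :: "real^'n^'n"
  assumes "has_core_inverse A"
  shows "is_core_inverse A (core_inv A)"
  using assms core_inv_eqI unfolding has_core_inverse_def by metis

lemma core_inverse_commute:
  fixes A G X :: "real^'n^'n"
  assumes "is_core_inverse A G" and "X ** A = A ** X" and "X ** transpose A = transpose A ** X"
  shows "X ** G = G ** X"
proof -
  note simps = core_inverse_simps [OF assms(1)]
  define P where "P = A ** G"
  \<comment> \<open>\<open>P\<close> is the orthogonal projection onto the range of \<open>A\<close>, which is invariant under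
    both \<open>X\<close> and \<open>X\<^sup>T\<close>; hence so is its orthogonal complement, and \<open>X\<close> commutes with \<open>P\<close>.\<close>
  have "transpose P = P"
    by (simp add: P_def simps(5))
  have invariant: "Y ** P = P ** Y ** P" if "Y ** A = A ** Y" for Y :: "real^'n^'n"
    by (metis that P_def matrix_mul_assoc simps(1))
  have "transpose X ** A = A ** transpose X"
    by (metis assms(3) matrix_transpose_mul transpose_transpose)
  then have "transpose (transpose X ** P) = transpose (P ** transpose X ** P)"
    using invariant by metis
  then have "P ** X = P ** X ** P"
    by (simp add: matrix_transpose_mul \<open>transpose P = P\<close> matrix_mul_assoc)
  with invariant [OF assms(2)] have "X ** P = P ** X"
    by simp
  then have "A ** (A ** (X ** G ** G)) = A ** (A ** (G ** G ** X))"
    by (metis P_def assms(2) matrix_mul_assoc simps(2))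
  then have "A ** (X ** G ** G) = A ** (G ** G ** X)"
    by (rule core_inverse_cancel [OF assms(1)])
  then show ?thesis
    by (metis assms(2) matrix_mul_assoc simps(2,4))
qed

lemma core_inverses_commute:
  fixes A C G H :: "real^'n^'n"
  assumes "is_core_inverse A G" and "is_core_inverse C H"
    and "A ** C = C ** A" and "transpose A ** C = C ** transpose A"
  shows "C ** G = G ** C" "A ** H = H ** A" "G ** H = H ** G"
proof -
  have "A ** transpose C = transpose C ** A"
    by (metis assms(4) matrix_transpose_mul transpose_transpose)
  moreover have "transpose C ** transpose A = transpose A ** transpose C"
    by (metis assms(3) matrix_transpose_mul)
  ultimately show "C ** G = G ** C" "A ** H = H ** A" "G ** H = H ** G"
    using core_inverse_commute assms by metis+
qed

lemma core_inverse_mult: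
  fixes A C G H :: "real^'n^'n"
  assumes "is_core_inverse A G" and "is_core_inverse C H"
    and "A ** C = C ** A" and "transpose A ** C = C ** transpose A"
  shows "is_core_inverse (A ** C) (G ** H)"
proof -
  note simps = core_inverse_simps [OF assms(1)] and simps' = core_inverse_simps [OF assms(2)]
  note commute = core_inverses_commute [OF assms]
  have factor: "A ** C ** (G ** H) = A ** G ** (C ** H)"
    by (metis commute(1) matrix_mul_assoc)
  have "A ** C ** (G ** H) ** (A ** C) = A ** C"
    by (metis factor assms(3) commute(2) matrix_mul_assoc simps(1) simps'(1))
  moreover have "A ** C ** (G ** H ** (G ** H)) = G ** H"
    by (metis factor commute(1,3) matrix_mul_assoc simps(2) simps'(2))
  moreover have "C ** H ** (A ** G) = A ** G ** (C ** H)"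
    by (metis assms(3) commute matrix_mul_assoc)
  then have "transpose (A ** C ** (G ** H)) = A ** C ** (G ** H)"
    using matrix_transpose_mul [of "A ** G" "C ** H"] by (simp only: factor simps(5) simps'(5))
  ultimately show ?thesis
    by (simp add: is_core_inverse_def)
qed

lemma dmult_dcgi_form:
  "dmult (dcgi_form (A, B)) (dcgi_form (C, D)) =
    (core_inv A ** core_inv C,
     - (core_inv A ** core_inv C ** D ** core_inv C + core_inv A ** B ** core_inv A ** core_inv C))"
  by (simp add: dcgi_form_def dmult_def matrix_mul_uminus_left matrix_mul_uminus_right
      matrix_mul_assoc)

theorem mainTheorem9:
  fixes A B C D :: "real^'n^'n"
  assumes "has_core_inverse A" and "has_core_inverse C" and "has_core_inverse (A ** C)"
    and "is_dcgi (A, B) (dcgi_form (A, B))"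
    and "is_dcgi (C, D) (dcgi_form (C, D))"
    and "is_dcgi (dmult (A, B) (C, D)) (dcgi_form (dmult (A, B) (C, D)))"
    and "A ** C = C ** A"
    and "transpose A ** C = C ** transpose A"
    and "core_inv C ** B = B ** core_inv C"
    and "core_inv A ** D = D ** core_inv A"
  shows "dcgi_form (dmult (A, B) (C, D)) = dmult (dcgi_form (A, B)) (dcgi_form (C, D))
    \<and> dmult (dcgi_form (A, B)) (dcgi_form (C, D)) = dmult (dcgi_form (C, D)) (dcgi_form (A, B))"
proof -
  define G H where "G = core_inv A" and "H = core_inv C"
  have cG: "is_core_inverse A G" and cH: "is_core_inverse C H"
    using assms(1,2) by (simp_all add: G_def H_def is_core_inverse_core_inv)
  note commute = core_inverses_commute [OF cG cH assms(7,8)]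
  have HB: "H ** B = B ** H" and GD: "G ** D = D ** G"
    using assms(9,10) by (simp_all add: G_def H_def)
  have "core_inv (A ** C) = G ** H"
    by (rule core_inv_eqI [OF core_inverse_mult [OF cG cH assms(7,8)]])
  moreover have "G ** H ** (A ** D) ** (G ** H) = G ** H ** D ** H"
    by (metis GD commute(2,3) core_inverse_outer_inverse [OF cG] matrix_mul_assoc)
  moreover have "G ** H ** (B ** C) ** (G ** H) = G ** B ** G ** H"
    by (metis HB commute(1,3) core_inverse_outer_inverse [OF cH] matrix_mul_assoc)
  moreover have "H ** D ** H ** G = G ** H ** D ** H"
    by (metis GD commute(3) matrix_mul_assoc)
  moreover have "H ** G ** B ** G = G ** B ** G ** H"
    by (metis HB commute(3) matrix_mul_assoc)
  ultimately show ?thesis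
    unfolding dmult_dcgi_form
    by (simp add: dcgi_form_def dmult_def G_def [symmetric] H_def [symmetric]
        matrix_add_ldistrib matrix_add_rdistrib commute(3) [symmetric] add.commute)
qed

end
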